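(* With the notation of the context, for every $\rho\in S$ the set $U(\rho)$ is nonempty and not meager with respect to the topology $\tau$; in particular $\langle H,\tau\rangle$ is a Baire space.
   Context: Work in $2^\omega$ with coordinatewise addition mod 2 (also used for finite 0-1 sequences of equal domain). Fix integers $0=n_0<n_1<n_2<\cdots$ and sets $C_i\subseteq 2^{[n_i,n_{i+1})}$ such that for every $i$ and all $s_0,\ldots,s_{n_i}\in 2^{[n_i,n_{i+1})}$ both $\bigcap_{k\le n_i}(C_i+s_k)$ and $\bigcap_{k\le n_i}((2^{[n_i,n_{i+1})}\setminus C_i)+s_k)$ are nonempty. Let $H=\{x\in 2^\omega: x\restriction[n_i,n_{i+1})\in C_i \text{ for all } i\}$. Fix a sequence $\langle P_m:m\in\omega\rangle$ of nonempty perfect subsets of $2^\omega$; let $P_m^*=\{x+y:x,y\in P_m\}$ and $T_m^*=\{x\restriction k: x\in P_m^*, k\in\omega\}$. A tree mapping with domain $n\ge1$ is a partial function $\pi$ from $\{(k,\ell):k<\ell<n\}$ to $\omega$ such that for every $0<\ell<n$ there is exactly one $k<\ell$ with $\pi(k,\ell)$ defined. A finite sequence $s$ is acceptable if ${\rm dom}(s)=n_i$ for some $i$ and $s\restriction[n_j,n_{j+1})\in C_j$ for all $j<i$. $S$ is the set of all $\rho=\langle\pi,s_0,\ldots,s_{n-1}\rangle$ where $n=n(\rho)\ge1$, $\pi$ is a tree mapping with domain $n$, the $s_j$ are acceptable with a common domain $n_i$ with $n_i\ge n$ (put $i(\rho)=i$), and $s_k+s_\ell\in T^*_{\pi(k,\ell)}$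 whenever $\pi(k,\ell)$ is defined. For $\rho=\langle\pi,s_0,\ldots,s_{n-1}\rangle\in S$, $U(\rho)$ is the set of $x_0\in H$ for which there are $x_1,\ldots,x_{n-1}\in H$ with each $s_j$ an initial segment of $x_j$ and $\langle\pi,x_0\restriction n_j,\ldots,x_{n-1}\restriction n_j\rangle\in S$ for all $j>i(\rho)$. The sets $U(\rho)$, $\rho\in S$, form a basis of a topology $\tau$ on $H$. *)

theory Defs
  imports "HOL-Analysis.Analysis"
begin

text \<open>Elements of the Cantor space are functions nat => bool.  A finite 0-1 sequence with
domain A (a subset of nat) is represented by a function nat => bool that is False outside A.\<close>

definition cadd :: "(nat \<Rightarrow> bool) \<Rightarrow> (nat \<Rightarrow> bool) \<Rightarrow> (nat \<Rightarrow> bool)" where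
  "cadd x y = (\<lambda>k. x k \<noteq> y k)"

definition seqs :: "nat set \<Rightarrow> (nat \<Rightarrow> bool) set" where
  "seqs A = {s. \<forall>k. k \<notin> A \<longrightarrow> s k = False}"

definition restr :: "(nat \<Rightarrow> bool) \<Rightarrow> nat set \<Rightarrow> (nat \<Rightarrow> bool)" where
  "restr x A = (\<lambda>k. if k \<in> A then x k else False)"

definition setadd :: "(nat \<Rightarrow> bool) set \<Rightarrow> (nat \<Rightarrow> bool) \<Rightarrow> (nat \<Rightarrow> bool) set" where
  "setadd C s = (\<lambda>c. cadd c s) ` C"

definition cantor_top :: "(nat \<Rightarrow> bool) topology" where
  "cantor_top = product_topology (\<lambda>_. discrete_topology (UNIV :: bool set)) UNIV"

definition perfect_set :: "(nat \<Rightarrow> bool) set \<Rightarrow> bool" where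
  "perfect_set P \<longleftrightarrow> cantor_top derived_set_of P = P"

definition Hset :: "(nat \<Rightarrow> nat) \<Rightarrow> (nat \<Rightarrow> (nat \<Rightarrow> bool) set) \<Rightarrow> (nat \<Rightarrow> bool) set" where
  "Hset N C = {x. \<forall>i. restr x {N i..<N (Suc i)} \<in> C i}"

definition Pstar :: "(nat \<Rightarrow> bool) set \<Rightarrow> (nat \<Rightarrow> bool) set" where
  "Pstar P = {cadd x y | x y. x \<in> P \<and> y \<in> P}"

definition in_Tstar :: "(nat \<Rightarrow> bool) set \<Rightarrow> nat \<Rightarrow> (nat \<Rightarrow> bool) \<Rightarrow> bool" where
  "in_Tstar P d s \<longleftrightarrow> (\<exists>x \<in> Pstar P. s = restr x {..<d})"

definition tree_mapping :: "(nat \<times> nat \<Rightarrow> nat option) \<Rightarrow> nat \<Rightarrow> bool" where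
  "tree_mapping \<pi> n \<longleftrightarrow> n \<ge> 1 \<and>
     (\<forall>k l. \<pi> (k, l) \<noteq> None \<longrightarrow> k < l \<and> l < n) \<and>
     (\<forall>l. 0 < l \<and> l < n \<longrightarrow> (\<exists>!k. k < l \<and> \<pi> (k, l) \<noteq> None))"

definition acceptable :: "(nat \<Rightarrow> nat) \<Rightarrow> (nat \<Rightarrow> (nat \<Rightarrow> bool) set) \<Rightarrow> nat \<Rightarrow> (nat \<Rightarrow> bool) \<Rightarrow> bool" where
  "acceptable N C i s \<longleftrightarrow> s \<in> seqs {..<N i} \<and> (\<forall>j<i. restr s {N j..<N (Suc j)} \<in> C j)"

text \<open>A condition rho = <pi, s_0, ..., s_(n-1)> is represented as (pi, i, [s_0,...,s_(n-1)])
where n_i is the common domain of the s_j (i is uniquely determined since N is strictly increasing).\<close>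
definition Sset :: "(nat \<Rightarrow> nat) \<Rightarrow> (nat \<Rightarrow> (nat \<Rightarrow> bool) set) \<Rightarrow> (nat \<Rightarrow> (nat \<Rightarrow> bool) set)
    \<Rightarrow> ((nat \<times> nat \<Rightarrow> nat option) \<times> nat \<times> (nat \<Rightarrow> bool) list) set" where
  "Sset N C P = {(\<pi>, i, ss). tree_mapping \<pi> (length ss) \<and> N i \<ge> length ss \<and>
      (\<forall>j < length ss. acceptable N C i (ss ! j)) \<and>
      (\<forall>k l m. \<pi> (k, l) = Some m \<longrightarrow> in_Tstar (P m) (N i) (cadd (ss ! k) (ss ! l)))}"

definition Uset :: "(nat \<Rightarrow> nat) \<Rightarrow> (nat \<Rightarrow> (nat \<Rightarrow> bool) set) \<Rightarrow> (nat \<Rightarrow> (nat \<Rightarrow> bool) set)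
    \<Rightarrow> (nat \<times> nat \<Rightarrow> nat option) \<times> nat \<times> (nat \<Rightarrow> bool) list \<Rightarrow> (nat \<Rightarrow> bool) set" where
  "Uset N C P \<rho> = (case \<rho> of (\<pi>, i, ss) \<Rightarrow>
     {x0 \<in> Hset N C. \<exists>x :: nat \<Rightarrow> nat \<Rightarrow> bool. x 0 = x0 \<and>
        (\<forall>j < length ss. x j \<in> Hset N C \<and> restr (x j) {..<N i} = ss ! j) \<and>
        (\<forall>j > i. (\<pi>, j, map (\<lambda>k. restr (x k) {..<N j}) [0..<length ss]) \<in> Sset N C P)})"

definition tau :: "(nat \<Rightarrow> nat) \<Rightarrow> (nat \<Rightarrow> (nat \<Rightarrow> bool) set) \<Rightarrow> (nat \<Rightarrow> (nat \<Rightarrow> bool) set)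
    \<Rightarrow> (nat \<Rightarrow> bool) topology" where
  "tau N C P = topology_generated_by (Uset N C P ` Sset N C P)"

definition nowhere_dense_in :: "'a topology \<Rightarrow> 'a set \<Rightarrow> bool" where
  "nowhere_dense_in X A \<longleftrightarrow> A \<subseteq> topspace X \<and> X interior_of (X closure_of A) = {}"

definition meager_in :: "'a topology \<Rightarrow> 'a set \<Rightarrow> bool" where
  "meager_in X A \<longleftrightarrow> (\<exists>F. countable F \<and> (\<forall>B \<in> F. nowhere_dense_in X B) \<and> A = \<Union>F)"

definition Baire_space_top :: "'a topology \<Rightarrow> bool" where
  "Baire_space_top X \<longleftrightarrow> (\<forall>U. openin X U \<and> U \<noteq> {} \<longrightarrow> \<not> meager_in X U)"

end

(*
  A condition can always be extended by one level: by the intersection hypothesis on C_i there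
  is a single block c lying in every translate C_i + t_k, where the vertex labels t_k realise,
  along the edges of the tree, the blocks of the witnesses in P*_m; shifting c by t_k
  lengthens all nodes at once.  Two conditions whose basic sets share a point can be glued at
  their roots into one condition whose basic set contains that point and lies in both, so every
  tau-open set around a point of U(rho) contains the basic set of an extension of rho.  Given
  countably many nowhere dense sets, extend rho step by step so as to avoid the closure of each
  of them in turn; the nodes of this fusion sequence converge, and the limit of the root lies in
  U(rho) but in none of the given sets.
*)

theory Submission
  imports Defs
begin

lemma cadd_commute: "cadd a b = cadd b a"
  by (auto simp: cadd_def fun_eq_iff)

lemma cadd_assoc: "cadd (cadd a b) c = cadd a (cadd b c)"
  by (auto simp: cadd_def fun_eq_iff)

lemma cadd_left_commute: "cadd a (cadd b c) = cadd b (cadd a c)"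
  by (auto simp: cadd_def fun_eq_iff)

lemmas cadd_ac = cadd_assoc cadd_commute cadd_left_commute

lemma cadd_cancel_left [simp]: "cadd a (cadd a b) = b"
  by (auto simp: cadd_def fun_eq_iff)

lemma cadd_cancel_right [simp]: "cadd (cadd a b) b = a"
  by (auto simp: cadd_def fun_eq_iff)

lemma cadd_restr: "cadd (restr a A) (restr b A) = restr (cadd a b) A"
  by (auto simp: cadd_def restr_def fun_eq_iff)

lemma restr_restr: "restr (restr x A) B = restr x (A \<inter> B)"
  by (auto simp: restr_def fun_eq_iff)

lemma restr_in_seqs [simp]: "restr x A \<in> seqs A"
  by (auto simp: restr_def seqs_def)

lemma restr_seqs: "s \<in> seqs A \<Longrightarrow> restr s A = s"
  by (auto simp: restr_def seqs_def fun_eq_iff)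

lemma cadd_in_seqs: "a \<in> seqs A \<Longrightarrow> b \<in> seqs A \<Longrightarrow> cadd a b \<in> seqs A"
  by (auto simp: seqs_def cadd_def)

lemma restr_lessThan_split:
  "a \<le> b \<Longrightarrow> restr x {..<b} = cadd (restr x {..<a}) (restr x {a..<b})"
  by (auto simp: cadd_def restr_def fun_eq_iff)

lemma in_Tstar_restr:
  assumes "in_Tstar Q d s" and "d' \<le> d"
  shows "in_Tstar Q d' (restr s {..<d'})"
  using assms by (auto simp: in_Tstar_def restr_restr Int_absorb1 min_def)

lemma tree_mapping_edge: "tree_mapping \<pi> n \<Longrightarrow> \<pi> (k, l) = Some m \<Longrightarrow> k < l \<and> l < n"
  by (auto simp: tree_mapping_def)

lemma tree_mapping_parent:
  assumes "tree_mapping \<pi> n"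
  obtains par where "\<And>l. 0 < l \<Longrightarrow> l < n \<Longrightarrow> par l < l \<and> \<pi> (par l, l) \<noteq> None"
    and "\<And>k l. \<pi> (k, l) \<noteq> None \<Longrightarrow> k = par l"
proof
  define par where "par l = (THE k. k < l \<and> \<pi> (k, l) \<noteq> None)" for l
  have unique: "\<exists>!k. k < l \<and> \<pi> (k, l) \<noteq> None" if "0 < l" "l < n" for l
    using assms that by (simp add: tree_mapping_def)
  show "par l < l \<and> \<pi> (par l, l) \<noteq> None" if "0 < l" "l < n" for l
    using theI'[OF unique[OF that]] by (simp add: par_def)
  show "k = par l" if "\<pi> (k, l) \<noteq> None" for k l
  proof -
    have "k < l" "l < n" using assms that by (auto simp: tree_mapping_def)
    then show ?thesis
      using the1_equality[OF unique] that by (simp add: par_def)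
  qed
qed

lemma edge_labels_as_differences:
  fixes n :: nat and par :: "nat \<Rightarrow> nat"
  assumes "\<And>l. 0 < l \<Longrightarrow> l < n \<Longrightarrow> par l < l" and "\<And>l. w l \<in> seqs B"
  shows "\<exists>t. (\<forall>k. t k \<in> seqs B) \<and> (\<forall>l. 0 < l \<and> l < n \<longrightarrow> cadd (t (par l)) (t l) = w l)"
proof -
  have "n' \<le> n \<Longrightarrow> \<exists>t. (\<forall>k. t k \<in> seqs B) \<and> (\<forall>l. 0 < l \<and> l < n' \<longrightarrow> cadd (t (par l)) (t l) = w l)"
    for n'
  proof (induction n')
    case 0
    show ?case by (intro exI[of _ "\<lambda>_ _. False"]) (auto simp: seqs_def)
  next
    case (Suc n')
    then obtain t where t: "\<forall>k. t k \<in> seqs B" "\<forall>l. 0 < l \<and> l < n' \<longrightarrow> cadd (t (par l)) (t l) = w l"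
      by auto
    define t' where "t' = t(n' := cadd (t (par n')) (w n'))"
    have "cadd (t' (par l)) (t' l) = w l" if "0 < l" "l < Suc n'" for l
      using t(2) assms(1)[of l] Suc.prems that by (cases "l < n'") (auto simp: t'_def less_Suc_eq)
    moreover have "\<forall>k. t' k \<in> seqs B"
      using t(1) assms(2) by (simp add: t'_def cadd_in_seqs)
    ultimately show ?case by blast
  qed
  then show ?thesis by blast
qed

text \<open>Gluing hangs the tree \<open>\<pi>2\<close> onto \<open>\<pi>1\<close> with \<open>n1\<close> nodes by identifying the two roots: node
  \<open>k > 0\<close> of \<open>\<pi>2\<close> becomes node \<open>k + n1 - 1\<close> (this is \<open>glue_index\<close>, inverted by \<open>k \<mapsto> k + 1 - n1\<close>).\<close>

definition glue_tree ::
    "(nat \<times> nat \<Rightarrow> nat option) \<Rightarrow> nat \<Rightarrow> (nat \<times> nat \<Rightarrow> nat option) \<Rightarrow> nat \<times> nat \<Rightarrow> nat option"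
  where
  "glue_tree \<pi>1 n1 \<pi>2 = (\<lambda>(k, l). if l < n1 then \<pi>1 (k, l)
     else if 0 < k \<and> k < n1 then None else \<pi>2 (k + 1 - n1, l + 1 - n1))"

definition glue_index :: "nat \<Rightarrow> nat \<Rightarrow> nat" where
  "glue_index n1 k = (if k = 0 then 0 else k + n1 - 1)"

definition glue_fun :: "nat \<Rightarrow> (nat \<Rightarrow> 'a) \<Rightarrow> (nat \<Rightarrow> 'a) \<Rightarrow> nat \<Rightarrow> 'a" where
  "glue_fun n1 f1 f2 k = (if k < n1 then f1 k else f2 (k + 1 - n1))"

lemma map_le_glue_tree: "tree_mapping \<pi>1 n1 \<Longrightarrow> \<pi>1 \<subseteq>\<^sub>m glue_tree \<pi>1 n1 \<pi>2"
  by (auto simp: map_le_def glue_tree_def dest: tree_mapping_edge)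

lemma glue_tree_glue_index:
  assumes "tree_mapping \<pi>2 n2" and "0 < n1" and "\<pi>2 (k, l) = Some m"
  shows "glue_tree \<pi>1 n1 \<pi>2 (glue_index n1 k, glue_index n1 l) = Some m"
  using tree_mapping_edge[OF assms(1,3)] assms(2,3) by (auto simp: glue_tree_def glue_index_def)

lemma glue_fun_glue_index: "0 < n1 \<Longrightarrow> f1 0 = f2 0 \<Longrightarrow> glue_fun n1 f1 f2 (glue_index n1 k) = f2 k"
  by (auto simp: glue_fun_def glue_index_def)

lemma glue_tree_edge:
  assumes t1: "tree_mapping \<pi>1 n1" and t2: "tree_mapping \<pi>2 n2"
    and edge: "glue_tree \<pi>1 n1 \<pi>2 (k, l) = Some m"
  shows "k < l \<and> l < n1 + n2 - 1"
proof (cases "l < n1")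
  case True
  then have "\<pi>1 (k, l) = Some m" using edge by (simp add: glue_tree_def)
  from tree_mapping_edge[OF t1 this] t2 show ?thesis by (auto simp: tree_mapping_def)
next
  case False
  then have "\<pi>2 (k + 1 - n1, l + 1 - n1) = Some m" and "k = 0 \<or> n1 \<le> k"
    using edge by (auto simp: glue_tree_def split: if_splits)
  moreover have "0 < n1" using t1 by (simp add: tree_mapping_def)
  ultimately show ?thesis using tree_mapping_edge[OF t2] False by fastforce
qed

lemma glue_tree_parent:
  assumes t1: "tree_mapping \<pi>1 n1" and t2: "tree_mapping \<pi>2 n2"
    and "0 < l" and "l < n1 + n2 - 1"
  shows "\<exists>!k. k < l \<and> glue_tree \<pi>1 n1 \<pi>2 (k, l) \<noteq> None"
proof (cases "l < n1")
  case True
  then have "glue_tree \<pi>1 n1 \<pi>2 (k, l) = \<pi>1 (k, l)" for k by (simp add: glue_tree_def)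
  moreover have "\<exists>!k. k < l \<and> \<pi>1 (k, l) \<noteq> None"
    using t1 assms(3) True by (simp add: tree_mapping_def)
  ultimately show ?thesis by simp
next
  case False
  define l' where "l' = l + 1 - n1"
  have "0 < n1" using t1 by (simp add: tree_mapping_def)
  have "0 < l'" "l' < n2" using False assms(3,4) by (auto simp: l'_def)
  then obtain k' where k': "k' < l'" "\<pi>2 (k', l') \<noteq> None"
    and unique: "\<And>j. j < l' \<Longrightarrow> \<pi>2 (j, l') \<noteq> None \<Longrightarrow> j = k'"
    using t2 unfolding tree_mapping_def by metis
  have glue_l:
    "glue_tree \<pi>1 n1 \<pi>2 (k, l) = (if 0 < k \<and> k < n1 then None else \<pi>2 (k + 1 - n1, l'))" for k
    using False by (simp add: glue_tree_def l'_def)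
  show ?thesis
  proof
    show "glue_index n1 k' < l \<and> glue_tree \<pi>1 n1 \<pi>2 (glue_index n1 k', l) \<noteq> None"
      using k' \<open>0 < n1\<close> by (auto simp: glue_l glue_index_def l'_def)
    fix j assume j: "j < l \<and> glue_tree \<pi>1 n1 \<pi>2 (j, l) \<noteq> None"
    then have "j = 0 \<or> n1 \<le> j" and "\<pi>2 (j + 1 - n1, l') \<noteq> None"
      by (auto simp: glue_l split: if_splits)
    moreover have "j + 1 - n1 < l'" using j False by (auto simp: l'_def)
    ultimately have "j + 1 - n1 = k'" using unique by blast
    with \<open>j = 0 \<or> n1 \<le> j\<close> \<open>0 < n1\<close> show "j = glue_index n1 k'"
      by (auto simp: glue_index_def)
  qed
qed

lemma tree_mapping_glue:
  assumes "tree_mapping \<pi>1 n1" and "tree_mapping \<pi>2 n2"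
  shows "tree_mapping (glue_tree \<pi>1 n1 \<pi>2) (n1 + n2 - 1)"
proof -
  have "0 < n1" "0 < n2" using assms by (auto simp: tree_mapping_def)
  then show ?thesis
    using glue_tree_edge[OF assms] glue_tree_parent[OF assms] by (auto simp: tree_mapping_def)
qed

lemma nth_append_tl:
  assumes "xs ! 0 = ys ! 0" and "xs \<noteq> []" and "ys \<noteq> []" and "k = 0 \<or> length xs \<le> k"
  shows "(xs @ tl ys) ! k = ys ! (k + 1 - length xs)"
  using assms by (cases ys) (auto simp: nth_append)

lemma coherent_restr_limit:
  fixes m0 :: nat
  assumes coherent: "\<And>m m'. m0 \<le> m \<Longrightarrow> m \<le> m' \<Longrightarrow> restr (f m') {..<d m} = f m"
    and unbounded: "\<And>p. \<exists>m \<ge> m0. p < d m"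
  shows "\<exists>x. \<forall>m \<ge> m0. restr x {..<d m} = f m"
proof (intro exI allI impI)
  define late where "late p = (SOME m. m0 \<le> m \<and> p < d m)" for p
  have late: "m0 \<le> late p" "p < d (late p)" for p
    using someI_ex[OF unbounded[of p, unfolded Bex_def]] by (auto simp: late_def)
  fix m assume "m0 \<le> m"
  show "restr (\<lambda>p. f (late p) p) {..<d m} = f m"
  proof
    fix p
    show "restr (\<lambda>p. f (late p) p) {..<d m} p = f m p"
    proof (cases "p < d m")
      case True
      have "f (late p) p = f (max m (late p)) p"
        using fun_cong[OF coherent[OF late(1)[of p] max.cobounded2, of m], of p] late(2)[of p]
        by (simp add: restr_def)
      also have "\<dots> = f m p"
        using fun_cong[OF coherent[OF \<open>m0 \<le> m\<close> max.cobounded1, of "late p"], of p] True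
        by (simp add: restr_def)
      finally show ?thesis using True by (simp add: restr_def)
    next
      case False
      then show ?thesis
        using fun_cong[OF coherent[OF \<open>m0 \<le> m\<close> order.refl], of p] by (simp add: restr_def)
    qed
  qed
qed

type_synonym condition = "(nat \<times> nat \<Rightarrow> nat option) \<times> nat \<times> (nat \<Rightarrow> bool) list"

locale tree_conditions =
  fixes N :: "nat \<Rightarrow> nat"
    and C :: "nat \<Rightarrow> (nat \<Rightarrow> bool) set"
    and P :: "nat \<Rightarrow> (nat \<Rightarrow> bool) set"
  assumes N_strict_mono: "strict_mono N"
    and C_block: "\<And>i. C i \<subseteq> seqs {N i..<N (Suc i)}"
    and C_translates_meet: "\<And>i s. (\<forall>k \<le> N i. s k \<in> seqs {N i..<N (Suc i)}) \<Longrightarrow>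
                 (\<Inter>k \<in> {..N i}. setadd (C i) (s k)) \<noteq> {}"
begin

abbreviation "S \<equiv> Sset N C P"
abbreviation "U \<equiv> Uset N C P"
abbreviation "H \<equiv> Hset N C"
abbreviation "T \<equiv> tau N C P"

abbreviation level_restrs :: "(nat \<Rightarrow> nat \<Rightarrow> bool) \<Rightarrow> nat \<Rightarrow> nat \<Rightarrow> (nat \<Rightarrow> bool) list" where
  "level_restrs w n j \<equiv> map (\<lambda>k. restr (w k) {..<N j}) [0..<n]"

lemma N_mono: "i \<le> j \<Longrightarrow> N i \<le> N j"
  using N_strict_mono by (simp add: strict_mono_less_eq)

lemma N_less: "i < j \<Longrightarrow> N i < N j"
  using N_strict_mono by (simp add: strict_mono_less)

lemma le_N: "i \<le> N i"
  using N_strict_mono by (simp add: strict_mono_imp_increasing)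

lemma restr_restr_N: "i \<le> j \<Longrightarrow> restr (restr x {..<N j}) {..<N i} = restr x {..<N i}"
  using N_mono by (simp add: restr_restr Int_absorb1)

lemma acceptable_restr:
  assumes "acceptable N C j' s" and "j \<le> j'"
  shows "acceptable N C j (restr s {..<N j})"
  unfolding acceptable_def
proof (intro conjI allI impI)
  fix i assume "i < j"
  then have "{..<N j} \<inter> {N i..<N (Suc i)} = {N i..<N (Suc i)}"
    using N_mono[of "Suc i" j] by auto
  then show "restr (restr s {..<N j}) {N i..<N (Suc i)} \<in> C i"
    using assms \<open>i < j\<close> by (simp add: acceptable_def restr_restr)
qed simp

lemma acceptable_extend:
  assumes "acceptable N C i s" and "u \<in> C i"
  shows "acceptable N C (Suc i) (cadd s u)" and "restr (cadd s u) {..<N i} = s"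
proof -
  have s: "s \<in> seqs {..<N i}" and u: "u \<in> seqs {N i..<N (Suc i)}"
    using assms C_block by (auto simp: acceptable_def)
  have block: "restr (cadd s u) {N j..<N (Suc j)} = (if j < i then restr s {N j..<N (Suc j)} else u)"
    if "j \<le> i" for j
    using s u that N_mono[of "Suc j" i]
    by (auto simp: restr_def cadd_def seqs_def fun_eq_iff not_less_eq_eq)
  show "restr (cadd s u) {..<N i} = s"
    using s u by (auto simp: restr_def cadd_def seqs_def fun_eq_iff)
  show "acceptable N C (Suc i) (cadd s u)"
    unfolding acceptable_def
  proof (intro conjI allI impI)
    show "cadd s u \<in> seqs {..<N (Suc i)}"
      using s u N_less[of i "Suc i"] by (auto simp: seqs_def cadd_def)
    show "restr (cadd s u) {N j..<N (Suc j)} \<in> C j" if "j < Suc i" for j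
      using assms block[of j] that by (cases "j < i") (auto simp: acceptable_def less_Suc_eq)
  qed
qed

lemma Hset_if_acceptable_cofinal:
  assumes "\<And>i. \<exists>j \<ge> i. acceptable N C j (restr x {..<N j})"
  shows "x \<in> H"
  unfolding Hset_def
proof (intro CollectI allI)
  fix i
  obtain j where j: "Suc i \<le> j" "acceptable N C j (restr x {..<N j})"
    using assms by blast
  then have "restr (restr x {..<N j}) {N i..<N (Suc i)} \<in> C i"
    by (auto simp: acceptable_def)
  moreover have "{..<N j} \<inter> {N i..<N (Suc i)} = {N i..<N (Suc i)}"
    using N_mono j(1) by fastforce
  ultimately show "restr x {N i..<N (Suc i)} \<in> C i"
    by (simp add: restr_restr)
qed

lemma Sset_map_iff:
  "(\<pi>, j, map f [0..<n]) \<in> S \<longleftrightarrow> tree_mapping \<pi> n \<and> n \<le> N j \<and> (\<forall>k<n. acceptable N C j (f k)) \<and>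
     (\<forall>k l m. \<pi> (k, l) = Some m \<longrightarrow> in_Tstar (P m) (N j) (cadd (f k) (f l)))"
proof -
  have "(\<forall>k l m. \<pi> (k, l) = Some m \<longrightarrow> in_Tstar (P m) (N j) (cadd (map f [0..<n] ! k) (map f [0..<n] ! l)))
      \<longleftrightarrow> (\<forall>k l m. \<pi> (k, l) = Some m \<longrightarrow> in_Tstar (P m) (N j) (cadd (f k) (f l)))"
    if tm: "tree_mapping \<pi> n"
  proof (intro iff_allI imp_cong refl)
    fix k l m assume "\<pi> (k, l) = Some m"
    then have "k < n" "l < n" using tree_mapping_edge[OF tm] by fastforce+
    then show "in_Tstar (P m) (N j) (cadd (map f [0..<n] ! k) (map f [0..<n] ! l))
        = in_Tstar (P m) (N j) (cadd (f k) (f l))" by simp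
  qed
  then show ?thesis by (auto simp: Sset_def)
qed

lemma Sset_relabel:
  assumes "(\<pi>', j', ss') \<in> S" and "tree_mapping \<pi> n"
    and "\<And>k. k < n \<Longrightarrow> g k < length ss'"
    and "\<And>k l m. \<pi> (k, l) = Some m \<Longrightarrow> \<pi>' (g k, g l) = Some m"
    and "j \<le> j'" and "n \<le> N j"
  shows "(\<pi>, j, map (\<lambda>k. restr (ss' ! g k) {..<N j}) [0..<n]) \<in> S"
  unfolding Sset_map_iff
proof (intro conjI allI impI)
  show "acceptable N C j (restr (ss' ! g k) {..<N j})" if "k < n" for k
  proof (rule acceptable_restr)
    show "acceptable N C j' (ss' ! g k)" using assms(1,3) that by (simp add: Sset_def)
  qed (rule assms(5))
  show "in_Tstar (P m) (N j) (cadd (restr (ss' ! g k) {..<N j}) (restr (ss' ! g l) {..<N j}))"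
    if "\<pi> (k, l) = Some m" for k l m
  proof -
    have "in_Tstar (P m) (N j') (cadd (ss' ! g k) (ss' ! g l))"
      using assms(1,4) that by (simp add: Sset_def)
    from in_Tstar_restr[OF this N_mono[OF assms(5)]] show ?thesis by (simp add: cadd_restr)
  qed
qed (use assms in auto)

lemma edge_witnesses_from_vertex_labels:
  assumes "(\<pi>, i, ss) \<in> S"
  obtains t where "\<And>k. t k \<in> seqs {N i..<N (Suc i)}"
    and "\<And>k l m. \<pi> (k, l) = Some m \<Longrightarrow> \<exists>y \<in> Pstar (P m).
           cadd (ss ! k) (ss ! l) = restr y {..<N i} \<and> cadd (t k) (t l) = restr y {N i..<N (Suc i)}"
proof -
  define n where "n = length ss"
  define B where "B = {N i..<N (Suc i)}"
  have tm: "tree_mapping \<pi> n"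
    and edge: "\<And>k l m. \<pi> (k, l) = Some m \<Longrightarrow> in_Tstar (P m) (N i) (cadd (ss ! k) (ss ! l))"
    using assms by (auto simp: Sset_def n_def)
  obtain par where par: "\<And>l. 0 < l \<Longrightarrow> l < n \<Longrightarrow> par l < l \<and> \<pi> (par l, l) \<noteq> None"
    and par_unique: "\<And>k l. \<pi> (k, l) \<noteq> None \<Longrightarrow> k = par l"
    using tree_mapping_parent[OF tm] by blast
  have "\<exists>y. 0 < l \<and> l < n \<longrightarrow> y \<in> Pstar (P (the (\<pi> (par l, l)))) \<and>
      cadd (ss ! par l) (ss ! l) = restr y {..<N i}" for l
  proof (cases "0 < l \<and> l < n")
    case True
    then obtain m where "\<pi> (par l, l) = Some m" using par by blast
    then show ?thesis using edge[of "par l" l m] by (auto simp: in_Tstar_def)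
  qed auto
  then obtain y where y: "\<And>l. 0 < l \<Longrightarrow> l < n \<Longrightarrow> y l \<in> Pstar (P (the (\<pi> (par l, l)))) \<and>
      cadd (ss ! par l) (ss ! l) = restr (y l) {..<N i}"
    by metis
  obtain t where t: "\<And>k. t k \<in> seqs B"
    and t_edge: "\<And>l. 0 < l \<Longrightarrow> l < n \<Longrightarrow> cadd (t (par l)) (t l) = restr (y l) B"
    using edge_labels_as_differences[of n par "\<lambda>l. restr (y l) B" B] par by auto
  show ?thesis
  proof
    show "t k \<in> seqs {N i..<N (Suc i)}" for k using t by (simp add: B_def)
    show "\<exists>y \<in> Pstar (P m). cadd (ss ! k) (ss ! l) = restr y {..<N i} \<and>
        cadd (t k) (t l) = restr y {N i..<N (Suc i)}"
      if "\<pi> (k, l) = Some m" for k l m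
    proof -
      have "k < l" "l < n" using tree_mapping_edge[OF tm that] by auto
      moreover have "k = par l" using par_unique that by simp
      ultimately show ?thesis using y[of l] t_edge[of l] that by (auto simp: B_def)
    qed
  qed
qed

lemma block_extension:
  assumes "(\<pi>, i, ss) \<in> S"
  obtains u where "\<And>k. k < length ss \<Longrightarrow> u k \<in> C i"
    and "\<And>k l m. \<pi> (k, l) = Some m \<Longrightarrow> \<exists>y \<in> Pstar (P m).
           cadd (ss ! k) (ss ! l) = restr y {..<N i} \<and> cadd (u k) (u l) = restr y {N i..<N (Suc i)}"
proof -
  obtain t where t: "\<And>k. t k \<in> seqs {N i..<N (Suc i)}"
    and t_edge: "\<And>k l m. \<pi> (k, l) = Some m \<Longrightarrow> \<exists>y \<in> Pstar (P m).
           cadd (ss ! k) (ss ! l) = restr y {..<N i} \<and> cadd (t k) (t l) = restr y {N i..<N (Suc i)}"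
    using edge_witnesses_from_vertex_labels[OF assms] by blast
  obtain c where c: "\<And>k. k \<le> N i \<Longrightarrow> c \<in> setadd (C i) (t k)"
    using C_translates_meet[of i t] t by auto
  have "length ss \<le> N i" using assms by (simp add: Sset_def)
  show ?thesis
  proof
    show "cadd c (t k) \<in> C i" if "k < length ss" for k
      using c[of k] that \<open>length ss \<le> N i\<close> by (auto simp: setadd_def)
    show "\<exists>y \<in> Pstar (P m). cadd (ss ! k) (ss ! l) = restr y {..<N i} \<and>
        cadd (cadd c (t k)) (cadd c (t l)) = restr y {N i..<N (Suc i)}"
      if "\<pi> (k, l) = Some m" for k l m
      using t_edge[OF that] by (simp add: cadd_ac)
  qed
qed

definition extends :: "condition \<Rightarrow> condition \<Rightarrow> bool" where
  "extends \<sigma>' \<sigma> \<longleftrightarrow> (case \<sigma>' of (\<pi>', i', ss') \<Rightarrow> case \<sigma> of (\<pi>, i, ss) \<Rightarrow>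
     i < i' \<and> \<pi> \<subseteq>\<^sub>m \<pi>' \<and> length ss \<le> length ss' \<and> (\<forall>k < length ss. restr (ss' ! k) {..<N i} = ss ! k))"

lemma extends_simp [simp]:
  "extends (\<pi>', i', ss') (\<pi>, i, ss) \<longleftrightarrow>
     i < i' \<and> \<pi> \<subseteq>\<^sub>m \<pi>' \<and> length ss \<le> length ss' \<and> (\<forall>k < length ss. restr (ss' ! k) {..<N i} = ss ! k)"
  by (simp add: extends_def)

lemma extends_trans:
  assumes "extends \<sigma>'' \<sigma>'" and "extends \<sigma>' \<sigma>"
  shows "extends \<sigma>'' \<sigma>"
proof -
  obtain \<pi> i ss \<pi>' i' ss' \<pi>'' i'' ss'' where
    \<sigma>: "\<sigma> = (\<pi>, i, ss)" and \<sigma>': "\<sigma>' = (\<pi>', i', ss')" and \<sigma>'': "\<sigma>'' = (\<pi>'', i'', ss'')"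
    by (cases \<sigma>; cases \<sigma>'; cases \<sigma>'')
  have "restr (ss'' ! k) {..<N i} = ss ! k" if "k < length ss" for k
  proof -
    have "restr (ss'' ! k) {..<N i} = restr (restr (ss'' ! k) {..<N i'}) {..<N i}"
      using assms \<sigma> \<sigma>' by (simp add: restr_restr_N)
    also have "\<dots> = ss ! k" using assms that \<sigma> \<sigma>' \<sigma>'' by auto
    finally show ?thesis .
  qed
  then show ?thesis using assms \<sigma> \<sigma>' \<sigma>'' by (auto intro: map_le_trans)
qed

lemma Sset_extend_level:
  assumes "(\<pi>, i, ss) \<in> S"
  shows "\<exists>ss'. (\<pi>, Suc i, ss') \<in> S \<and> extends (\<pi>, Suc i, ss') (\<pi>, i, ss)"
proof -
  define n where "n = length ss"
  obtain u where u: "\<And>k. k < n \<Longrightarrow> u k \<in> C i"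
    and u_edge: "\<And>k l m. \<pi> (k, l) = Some m \<Longrightarrow> \<exists>y \<in> Pstar (P m).
           cadd (ss ! k) (ss ! l) = restr y {..<N i} \<and> cadd (u k) (u l) = restr y {N i..<N (Suc i)}"
    using block_extension[OF assms] unfolding n_def by blast
  have tm: "tree_mapping \<pi> n" and "n \<le> N i" and acc: "\<And>k. k < n \<Longrightarrow> acceptable N C i (ss ! k)"
    using assms by (auto simp: Sset_def n_def)
  define ss' where "ss' = map (\<lambda>k. cadd (ss ! k) (u k)) [0..<n]"
  have "(\<pi>, Suc i, ss') \<in> S"
    unfolding ss'_def Sset_map_iff
  proof (intro conjI allI impI)
    show "n \<le> N (Suc i)" using \<open>n \<le> N i\<close> N_less[of i "Suc i"] by simp
    show "acceptable N C (Suc i) (cadd (ss ! k) (u k))" if "k < n" for k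
      using acceptable_extend(1)[OF acc[OF that] u[OF that]] .
    show "in_Tstar (P m) (N (Suc i)) (cadd (cadd (ss ! k) (u k)) (cadd (ss ! l) (u l)))"
      if kl: "\<pi> (k, l) = Some m" for k l m
    proof -
      obtain y where "y \<in> Pstar (P m)" and y: "cadd (ss ! k) (ss ! l) = restr y {..<N i}"
        "cadd (u k) (u l) = restr y {N i..<N (Suc i)}"
        using u_edge[OF kl] by blast
      have "cadd (cadd (ss ! k) (u k)) (cadd (ss ! l) (u l)) =
          cadd (cadd (ss ! k) (ss ! l)) (cadd (u k) (u l))"
        by (simp add: cadd_ac)
      also have "\<dots> = restr y {..<N (Suc i)}"
        using restr_lessThan_split[OF N_mono[of i "Suc i"], of y] by (simp add: y)
      finally show ?thesis
        using \<open>y \<in> Pstar (P m)\<close> by (auto simp: in_Tstar_def)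
    qed
  qed (use tm in auto)
  moreover have "extends (\<pi>, Suc i, ss') (\<pi>, i, ss)"
    using acceptable_extend(2)[OF acc u] by (simp add: ss'_def n_def)
  ultimately show ?thesis by blast
qed

definition witnesses :: "(nat \<Rightarrow> nat \<Rightarrow> bool) \<Rightarrow> condition \<Rightarrow> bool" where
  "witnesses w \<sigma> \<longleftrightarrow> (case \<sigma> of (\<pi>, i, ss) \<Rightarrow>
     (\<forall>k < length ss. w k \<in> H \<and> restr (w k) {..<N i} = ss ! k) \<and>
     (\<forall>j > i. (\<pi>, j, level_restrs w (length ss) j) \<in> S))"

lemma Uset_iff:
  assumes "(\<pi>, i, ss) \<in> S"
  shows "x \<in> U (\<pi>, i, ss) \<longleftrightarrow> (\<exists>w. w 0 = x \<and> witnesses w (\<pi>, i, ss))"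
proof -
  have "0 < length ss" using assms by (auto simp: Sset_def tree_mapping_def)
  then show ?thesis by (auto simp: Uset_def witnesses_def)
qed

lemma extends_chain:
  assumes "\<And>m. extends (\<pi> (Suc m), lv (Suc m), ls (Suc m)) (\<pi> m, lv m, ls m)" and "m < m'"
  shows "extends (\<pi> m', lv m', ls m') (\<pi> m, lv m, ls m)"
  using assms(2) by (induction rule: less_Suc_induct) (use assms(1) extends_trans in blast)+

lemma extends_chain_level:
  assumes "\<And>m. extends (\<pi> (Suc m), lv (Suc m), ls (Suc m)) (\<pi> m, lv m, ls m)"
  shows "m \<le> lv m"
  using assms by (intro strict_mono_imp_increasing strict_monoI_Suc) auto

lemma extends_chain_coherent:
  assumes S: "\<And>m. (\<pi> m, lv m, ls m) \<in> S"
    and ext: "\<And>m. extends (\<pi> (Suc m), lv (Suc m), ls (Suc m)) (\<pi> m, lv m, ls m)"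
    and "m \<le> m'"
  shows "length (ls m) \<le> length (ls m')"
    and "\<And>k. k < length (ls m) \<Longrightarrow> restr (ls m' ! k) {..<N (lv m)} = ls m ! k"
proof -
  have chain: "extends (\<pi> m', lv m', ls m') (\<pi> m, lv m, ls m)" if "m \<noteq> m'"
    using extends_chain[of \<pi> lv ls, OF ext] that \<open>m \<le> m'\<close> by simp
  then show "length (ls m) \<le> length (ls m')" by (cases "m = m'") auto
  show "restr (ls m' ! k) {..<N (lv m)} = ls m ! k" if "k < length (ls m)" for k
  proof (cases "m = m'")
    case True
    then show ?thesis using S[of m] that by (simp add: Sset_def acceptable_def restr_seqs)
  qed (use that chain in auto)
qed

lemma fusion_limit:
  assumes S: "\<And>m. (\<pi> m, lv m, ls m) \<in> S"
    and ext: "\<And>m. extends (\<pi> (Suc m), lv (Suc m), ls (Suc m)) (\<pi> m, lv m, ls m)"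
  obtains x where "\<And>m k. k < length (ls m) \<Longrightarrow> restr (x k) {..<N (lv m)} = ls m ! k"
    and "\<And>m k. k < length (ls m) \<Longrightarrow> x k \<in> H"
proof -
  note coherent = extends_chain_coherent[of \<pi> lv ls, OF S ext]
  have "\<exists>x. \<forall>m. k < length (ls m) \<longrightarrow> restr x {..<N (lv m)} = ls m ! k" for k
  proof (cases "\<exists>m. k < length (ls m)")
    case True
    define m0 where "m0 = (LEAST m. k < length (ls m))"
    have "k < length (ls m0)" using True LeastI_ex unfolding m0_def by metis
    have "\<exists>m \<ge> m0. p < N (lv m)" for p
      using le_N[of "lv (m0 + Suc p)"] extends_chain_level[of \<pi> lv ls, OF ext, of "m0 + Suc p"]
      by (intro exI[of _ "m0 + Suc p"]) simp
    then have "\<exists>x. \<forall>m \<ge> m0. restr x {..<N (lv m)} = ls m ! k"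
    proof (intro coherent_restr_limit)
      show "restr (ls m' ! k) {..<N (lv m)} = ls m ! k" if "m0 \<le> m" "m \<le> m'" for m m'
        using coherent[OF that(2)] coherent(1)[OF that(1)] \<open>k < length (ls m0)\<close> by simp
    qed
    then show ?thesis using Least_le[of "\<lambda>m. k < length (ls m)"] unfolding m0_def by blast
  qed simp
  then obtain x where x: "\<And>m k. k < length (ls m) \<Longrightarrow> restr (x k) {..<N (lv m)} = ls m ! k"
    by metis
  moreover have "x k \<in> H" if "k < length (ls m)" for k m
  proof (rule Hset_if_acceptable_cofinal)
    fix i
    have "k < length (ls (m + i))" using coherent(1)[of m "m + i"] that by simp
    then show "\<exists>j \<ge> i. acceptable N C j (restr (x k) {..<N j})"
      using x S[of "m + i"] extends_chain_level[of \<pi> lv ls, OF ext, of "m + i"]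
      by (intro exI[of _ "lv (m + i)"]) (simp add: Sset_def)
  qed
  ultimately show ?thesis using that by blast
qed

lemma fusion:
  assumes S: "\<And>m. (\<pi> m, lv m, ls m) \<in> S"
    and ext: "\<And>m. extends (\<pi> (Suc m), lv (Suc m), ls (Suc m)) (\<pi> m, lv m, ls m)"
  shows "\<exists>x. \<forall>m. x \<in> U (\<pi> m, lv m, ls m)"
proof -
  obtain x where x: "\<And>m k. k < length (ls m) \<Longrightarrow> restr (x k) {..<N (lv m)} = ls m ! k"
    and x_H: "\<And>m k. k < length (ls m) \<Longrightarrow> x k \<in> H"
    using fusion_limit[of \<pi> lv ls, OF S ext] by blast
  have "(\<pi> m, j, level_restrs x (length (ls m)) j) \<in> S" if "lv m < j" for m j
  proof -
    define m' where "m' = m + j"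
    have "m < m'" "j \<le> lv m'"
      using that extends_chain_level[of \<pi> lv ls, OF ext, of m'] by (auto simp: m'_def)
    have len: "length (ls m) \<le> length (ls m')"
      using extends_chain_coherent(1)[of \<pi> lv ls, OF S ext, of m m'] \<open>m < m'\<close> by simp
    have relabelled: "(\<pi> m, j, map (\<lambda>k. restr (ls m' ! id k) {..<N j}) [0..<length (ls m)]) \<in> S"
    proof (rule Sset_relabel[OF S[of m']])
      show "tree_mapping (\<pi> m) (length (ls m))" "length (ls m) \<le> N j"
        using S[of m] N_less[OF that] by (auto simp: Sset_def)
      show "\<pi> m' (id k, id l) = Some p" if "\<pi> m (k, l) = Some p" for k l p
        using extends_chain[of \<pi> lv ls, OF ext \<open>m < m'\<close>] that by (auto simp: map_le_def dom_def)
    qed (use len \<open>j \<le> lv m'\<close> in auto)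
    have "restr (ls m' ! k) {..<N j} = restr (x k) {..<N j}" if "k < length (ls m)" for k
      using x[of k m'] that len restr_restr_N[OF \<open>j \<le> lv m'\<close>, of "x k"] by simp
    then have "map (\<lambda>k. restr (ls m' ! id k) {..<N j}) [0..<length (ls m)] =
        level_restrs x (length (ls m)) j"
      by (intro map_cong refl) auto
    with relabelled show ?thesis by (simp only:)
  qed
  then have "witnesses x (\<pi> m, lv m, ls m)" for m
    using x x_H by (simp add: witnesses_def)
  then show ?thesis using Uset_iff[OF S] by blast
qed

lemma fusion_sequence_point:
  fixes R :: "nat \<Rightarrow> condition \<Rightarrow> bool"
  assumes "\<sigma>0 \<in> S" and step: "\<And>m \<sigma>. \<sigma> \<in> S \<Longrightarrow> \<exists>\<sigma>' \<in> S. extends \<sigma>' \<sigma> \<and> R m \<sigma>'"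
  shows "\<exists>x \<in> U \<sigma>0. \<forall>m. \<exists>\<sigma>. x \<in> U \<sigma> \<and> R m \<sigma>"
proof -
  have "\<exists>\<sigma>. \<forall>m. (\<sigma> m \<in> S \<and> (m = 0 \<longrightarrow> \<sigma> m = \<sigma>0)) \<and> (extends (\<sigma> (Suc m)) (\<sigma> m) \<and> R m (\<sigma> (Suc m)))"
  proof (rule dependent_nat_choice)
    show "\<exists>\<sigma>. \<sigma> \<in> S \<and> (0 = 0 \<longrightarrow> \<sigma> = \<sigma>0)" using assms(1) by blast
    show "\<exists>\<sigma>'. (\<sigma>' \<in> S \<and> (Suc m = 0 \<longrightarrow> \<sigma>' = \<sigma>0)) \<and> extends \<sigma>' \<sigma> \<and> R m \<sigma>'"
      if "\<sigma> \<in> S \<and> (m = 0 \<longrightarrow> \<sigma> = \<sigma>0)" for \<sigma> m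
      using step that by blast
  qed
  then obtain \<sigma> where \<sigma>: "\<And>m. \<sigma> m \<in> S" "\<sigma> 0 = \<sigma>0"
    and ext: "\<And>m. extends (\<sigma> (Suc m)) (\<sigma> m)" and R: "\<And>m. R m (\<sigma> (Suc m))"
    by blast
  have "\<exists>x. \<forall>m. x \<in> U (fst (\<sigma> m), fst (snd (\<sigma> m)), snd (snd (\<sigma> m)))"
    by (rule fusion) (simp_all add: \<sigma> ext)
  then obtain x where x: "\<And>m. x \<in> U (\<sigma> m)" by auto
  then show ?thesis using \<sigma>(2) R by metis
qed

lemma Uset_nonempty:
  assumes "\<sigma> \<in> S"
  shows "U \<sigma> \<noteq> {}"
proof -
  have step: "\<exists>\<sigma>' \<in> S. extends \<sigma>' \<sigma> \<and> True" if "\<sigma> \<in> S" for m :: nat and \<sigma>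
  proof -
    obtain \<pi> i ss where "\<sigma> = (\<pi>, i, ss)" by (cases \<sigma>)
    with Sset_extend_level that show ?thesis by blast
  qed
  show ?thesis
    using fusion_sequence_point[OF assms step] by blast
qed

lemma Sset_glue:
  assumes S1: "(\<pi>1, j, ss1) \<in> S" and S2: "(\<pi>2, j, ss2) \<in> S"
    and root: "ss1 ! 0 = ss2 ! 0" and bound: "length ss1 + length ss2 - 1 \<le> N j"
  shows "(glue_tree \<pi>1 (length ss1) \<pi>2, j, ss1 @ tl ss2) \<in> S"
proof -
  define n1 where "n1 = length ss1"
  have tm1: "tree_mapping \<pi>1 n1" and tm2: "tree_mapping \<pi>2 (length ss2)"
    using S1 S2 by (auto simp: Sset_def n1_def)
  then have "ss1 \<noteq> []" "ss2 \<noteq> []" by (auto simp: tree_mapping_def n1_def)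
  have from_ss2: "(ss1 @ tl ss2) ! k = ss2 ! (k + 1 - n1)" if "k = 0 \<or> n1 \<le> k" for k
    using nth_append_tl[OF root \<open>ss1 \<noteq> []\<close> \<open>ss2 \<noteq> []\<close>] that by (simp add: n1_def)
  have "acceptable N C j ((ss1 @ tl ss2) ! k)" if "k < length (ss1 @ tl ss2)" for k
  proof (cases "k < n1")
    case True
    then show ?thesis using S1 by (simp add: Sset_def nth_append n1_def)
  next
    case False
    then show ?thesis using S2 that from_ss2[of k] by (simp add: Sset_def n1_def)
  qed
  moreover have "in_Tstar (P m) (N j) (cadd ((ss1 @ tl ss2) ! k) ((ss1 @ tl ss2) ! l))"
    if edge: "glue_tree \<pi>1 n1 \<pi>2 (k, l) = Some m" for k l m
  proof (cases "l < n1")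
    case True
    then have "\<pi>1 (k, l) = Some m" using edge by (simp add: glue_tree_def)
    moreover have "k < n1" "l < n1" using tree_mapping_edge[OF tm1 calculation] by auto
    ultimately show ?thesis using S1 by (simp add: Sset_def nth_append n1_def)
  next
    case False
    then have "\<pi>2 (k + 1 - n1, l + 1 - n1) = Some m" and "k = 0 \<or> n1 \<le> k"
      using edge by (auto simp: glue_tree_def split: if_splits)
    then show ?thesis
      using S2 from_ss2 False by (simp add: Sset_def)
  qed
  moreover have "length ss1 + (length ss2 - 1) = length ss1 + length ss2 - 1"
    using \<open>ss2 \<noteq> []\<close> by (cases ss2) auto
  ultimately show ?thesis
    using tree_mapping_glue[OF tm1 tm2] bound by (simp add: Sset_def n1_def)
qed

lemma level_restrs_glue:
  assumes "0 < n1" and "0 < n2"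
  shows "level_restrs (glue_fun n1 w1 w2) (n1 + n2 - 1) j =
    level_restrs w1 n1 j @ tl (level_restrs w2 n2 j)"
  using assms by (intro nth_equalityI) (auto simp: nth_append nth_tl glue_fun_def Suc_diff_le)

lemma witnesses_relabel:
  assumes S': "(\<pi>', i', ss') \<in> S" and S: "(\<pi>, i, ss) \<in> S" and w: "witnesses w (\<pi>', i', ss')"
    and "i \<le> i'"
    and g: "\<And>k. k < length ss \<Longrightarrow> g k < length ss' \<and> restr (ss' ! g k) {..<N i} = ss ! k"
    and edges: "\<And>k l m. \<pi> (k, l) = Some m \<Longrightarrow> \<pi>' (g k, g l) = Some m"
  shows "witnesses (w \<circ> g) (\<pi>, i, ss)"
proof -
  define n where "n = length ss"
  have ss'_nth: "ss' ! k = restr (w k) {..<N i'}" if "k < length ss'" for k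
    using w that by (simp add: witnesses_def)
  have "ss' = level_restrs w (length ss') i'"
    using ss'_nth by (intro nth_equalityI) auto
  then have above: "(\<pi>', J, level_restrs w (length ss') J) \<in> S" if "i' \<le> J" for J
    using that w S' by (cases "J = i'") (auto simp: witnesses_def)
  have tm: "tree_mapping \<pi> n" and "n \<le> N i" using S by (auto simp: Sset_def n_def)
  have base: "w (g k) \<in> H \<and> restr (w (g k)) {..<N i} = ss ! k" if "k < n" for k
  proof
    show "w (g k) \<in> H" using w g[of k] that by (auto simp: witnesses_def n_def)
    have "restr (w (g k)) {..<N i} = restr (restr (w (g k)) {..<N i'}) {..<N i}"
      using \<open>i \<le> i'\<close> by (simp add: restr_restr_N)
    also have "\<dots> = ss ! k" using g[of k] that ss'_nth[of "g k"] by (simp add: n_def)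
    finally show "restr (w (g k)) {..<N i} = ss ! k" .
  qed
  have "(\<pi>, j, level_restrs (w \<circ> g) n j) \<in> S" if "i < j" for j
  proof -
    have "(\<pi>, j, map (\<lambda>k. restr (level_restrs w (length ss') (max j i') ! g k) {..<N j}) [0..<n]) \<in> S"
      using Sset_relabel[OF above[of "max j i'"] tm] g edges \<open>n \<le> N i\<close> N_less[OF that]
      by (simp add: n_def)
    moreover have "map (\<lambda>k. restr (level_restrs w (length ss') (max j i') ! g k) {..<N j}) [0..<n] =
        level_restrs (w \<circ> g) n j"
      using g by (intro map_cong refl) (simp add: n_def restr_restr_N)
    ultimately show ?thesis by simp
  qed
  then show ?thesis using base by (simp add: witnesses_def n_def)
qed

lemma Uset_relabel:
  assumes S': "(\<pi>', i', ss') \<in> S" and S: "(\<pi>, i, ss) \<in> S" and "i \<le> i'" and "g 0 = 0"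
    and g: "\<And>k. k < length ss \<Longrightarrow> g k < length ss' \<and> restr (ss' ! g k) {..<N i} = ss ! k"
    and edges: "\<And>k l m. \<pi> (k, l) = Some m \<Longrightarrow> \<pi>' (g k, g l) = Some m"
  shows "U (\<pi>', i', ss') \<subseteq> U (\<pi>, i, ss)"
proof
  fix x assume "x \<in> U (\<pi>', i', ss')"
  then obtain w where "w 0 = x" and "witnesses w (\<pi>', i', ss')"
    using Uset_iff[OF S'] by blast
  then have "witnesses (w \<circ> g) (\<pi>, i, ss)" and "(w \<circ> g) 0 = x"
    using witnesses_relabel[OF S' S _ \<open>i \<le> i'\<close> g edges] \<open>g 0 = 0\<close> by auto
  then show "x \<in> U (\<pi>, i, ss)" using Uset_iff[OF S] by blast
qed

lemma Uset_mono:
  assumes "\<sigma> \<in> S" and "\<sigma>' \<in> S" and "extends \<sigma>' \<sigma>"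
  shows "U \<sigma>' \<subseteq> U \<sigma>"
proof -
  obtain \<pi> i ss \<pi>' i' ss' where \<sigma>: "\<sigma> = (\<pi>, i, ss)" and \<sigma>': "\<sigma>' = (\<pi>', i', ss')"
    by (cases \<sigma>; cases \<sigma>')
  have "U (\<pi>', i', ss') \<subseteq> U (\<pi>, i, ss)"
  proof (rule Uset_relabel[where g = id])
    show "\<pi>' (id k, id l) = Some m" if "\<pi> (k, l) = Some m" for k l m
      using assms(3) that \<sigma> \<sigma>' by (auto simp: map_le_def dom_def)
  qed (use assms \<sigma> \<sigma>' in auto)
  then show ?thesis using \<sigma> \<sigma>' by simp
qed

lemma glued_condition:
  assumes S1: "(\<pi>1, i1, ss1) \<in> S" and S2: "(\<pi>2, i2, ss2) \<in> S"
    and w1: "witnesses w1 (\<pi>1, i1, ss1)" and w2: "witnesses w2 (\<pi>2, i2, ss2)" and root: "w1 0 = w2 0"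
    and "max i1 i2 < i3" and bound: "length ss1 + length ss2 - 1 \<le> N i3"
  defines "z \<equiv> glue_fun (length ss1) w1 w2"
  defines "\<sigma>3 \<equiv> (glue_tree \<pi>1 (length ss1) \<pi>2, i3, level_restrs z (length ss1 + length ss2 - 1) i3)"
  shows "\<sigma>3 \<in> S" and "witnesses z \<sigma>3"
proof -
  define n1 where "n1 = length ss1"
  define n2 where "n2 = length ss2"
  have "0 < n1" "0 < n2" using S1 S2 by (auto simp: Sset_def tree_mapping_def n1_def n2_def)
  have at_level: "(glue_tree \<pi>1 n1 \<pi>2, j, level_restrs z (n1 + n2 - 1) j) \<in> S"
    if "max i1 i2 < j" "n1 + n2 - 1 \<le> N j" for j
  proof -
    have "(\<pi>1, j, level_restrs w1 n1 j) \<in> S" "(\<pi>2, j, level_restrs w2 n2 j) \<in> S"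
      using w1 w2 that by (auto simp: witnesses_def n1_def n2_def)
    from Sset_glue[OF this]
    have "(glue_tree \<pi>1 n1 \<pi>2, j, level_restrs w1 n1 j @ tl (level_restrs w2 n2 j)) \<in> S"
      using root that \<open>0 < n1\<close> \<open>0 < n2\<close> by (simp add: n1_def)
    then show ?thesis
      by (simp only: z_def n1_def [symmetric] level_restrs_glue[OF \<open>0 < n1\<close> \<open>0 < n2\<close>])
  qed
  show "\<sigma>3 \<in> S"
    using at_level[OF \<open>max i1 i2 < i3\<close>] bound by (simp add: \<sigma>3_def n1_def n2_def)
  have "z k \<in> H" if "k < n1 + n2 - 1" for k
    using w1 w2 that by (cases "k < n1") (auto simp: witnesses_def z_def glue_fun_def n1_def n2_def)
  moreover have "(glue_tree \<pi>1 n1 \<pi>2, j, level_restrs z (n1 + n2 - 1) j) \<in> S" if "i3 < j" for j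
    using \<open>max i1 i2 < i3\<close> bound N_less[OF that] that by (intro at_level) (auto simp: n1_def n2_def)
  ultimately show "witnesses z \<sigma>3"
    by (simp add: witnesses_def \<sigma>3_def n1_def n2_def)
qed

lemma extends_glued:
  assumes S1: "(\<pi>1, i1, ss1) \<in> S" and w1: "witnesses w1 (\<pi>1, i1, ss1)" and "0 < n2" and "i1 < i3"
  shows "extends (glue_tree \<pi>1 (length ss1) \<pi>2, i3,
      level_restrs (glue_fun (length ss1) w1 w2) (length ss1 + n2 - 1) i3) (\<pi>1, i1, ss1)"
proof -
  define ss3 where "ss3 = level_restrs (glue_fun (length ss1) w1 w2) (length ss1 + n2 - 1) i3"
  have "restr (ss3 ! k) {..<N i1} = ss1 ! k" if "k < length ss1" for k
  proof -
    have "k < length ss1 + n2 - 1" using that \<open>0 < n2\<close> by linarith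
    then have "ss3 ! k = restr (w1 k) {..<N i3}" using that by (simp add: ss3_def glue_fun_def)
    then show ?thesis using w1 that \<open>i1 < i3\<close> by (simp add: restr_restr_N witnesses_def)
  qed
  moreover have "\<pi>1 \<subseteq>\<^sub>m glue_tree \<pi>1 (length ss1) \<pi>2"
    using S1 map_le_glue_tree by (simp add: Sset_def)
  moreover have "length ss1 \<le> length ss3" using \<open>0 < n2\<close> by (simp add: ss3_def)
  ultimately show ?thesis using \<open>i1 < i3\<close> by (simp add: ss3_def)
qed

lemma Uset_glued_subset:
  assumes S2: "(\<pi>2, i2, ss2) \<in> S" and w2: "witnesses w2 (\<pi>2, i2, ss2)"
    and root: "w1 0 = w2 0" and "0 < n1" and "i2 < i3"
  defines "ss3 \<equiv> level_restrs (glue_fun n1 w1 w2) (n1 + length ss2 - 1) i3"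
  assumes S3: "(glue_tree \<pi>1 n1 \<pi>2, i3, ss3) \<in> S"
  shows "U (glue_tree \<pi>1 n1 \<pi>2, i3, ss3) \<subseteq> U (\<pi>2, i2, ss2)"
proof (rule Uset_relabel[OF S3 S2, where g = "glue_index n1"])
  show "glue_index n1 k < length ss3 \<and> restr (ss3 ! glue_index n1 k) {..<N i2} = ss2 ! k"
    if "k < length ss2" for k
  proof
    have "glue_index n1 k < n1 + length ss2 - 1"
      using that \<open>0 < n1\<close> by (auto simp: glue_index_def)
    then show "glue_index n1 k < length ss3" by (simp add: ss3_def)
    have "glue_fun n1 w1 w2 (glue_index n1 k) = w2 k"
      using \<open>0 < n1\<close> root by (simp add: glue_fun_glue_index)
    with \<open>glue_index n1 k < n1 + length ss2 - 1\<close>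
    have "ss3 ! glue_index n1 k = restr (w2 k) {..<N i3}" by (simp add: ss3_def)
    then show "restr (ss3 ! glue_index n1 k) {..<N i2} = ss2 ! k"
      using w2 that \<open>i2 < i3\<close> by (simp add: restr_restr_N witnesses_def)
  qed
  show "glue_tree \<pi>1 n1 \<pi>2 (glue_index n1 k, glue_index n1 l) = Some m"
    if "\<pi>2 (k, l) = Some m" for k l m
  proof -
    have "tree_mapping \<pi>2 (length ss2)" using S2 by (simp add: Sset_def)
    from glue_tree_glue_index[OF this \<open>0 < n1\<close> that] show ?thesis .
  qed
qed (use \<open>i2 < i3\<close> in \<open>auto simp: glue_index_def\<close>)

lemma Uset_Int_refine:
  assumes "\<sigma>1 \<in> S" and "\<sigma>2 \<in> S" and "x \<in> U \<sigma>1" and "x \<in> U \<sigma>2"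
  shows "\<exists>\<sigma>3 \<in> S. extends \<sigma>3 \<sigma>1 \<and> x \<in> U \<sigma>3 \<and> U \<sigma>3 \<subseteq> U \<sigma>1 \<inter> U \<sigma>2"
proof -
  obtain \<pi>1 i1 ss1 \<pi>2 i2 ss2 where \<sigma>1: "\<sigma>1 = (\<pi>1, i1, ss1)" and \<sigma>2: "\<sigma>2 = (\<pi>2, i2, ss2)"
    by (cases \<sigma>1; cases \<sigma>2)
  have S1: "(\<pi>1, i1, ss1) \<in> S" and S2: "(\<pi>2, i2, ss2) \<in> S" using assms \<sigma>1 \<sigma>2 by auto
  obtain w1 w2 where w1: "witnesses w1 (\<pi>1, i1, ss1)" and w2: "witnesses w2 (\<pi>2, i2, ss2)"
    and "w1 0 = x" "w2 0 = x"
    using assms Uset_iff[OF S1] Uset_iff[OF S2] \<sigma>1 \<sigma>2 by metis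
  define i3 where "i3 = max i1 i2 + length ss1 + length ss2"
  define \<sigma>3 where "\<sigma>3 = (glue_tree \<pi>1 (length ss1) \<pi>2, i3,
      level_restrs (glue_fun (length ss1) w1 w2) (length ss1 + length ss2 - 1) i3)"
  have "0 < length ss1" "0 < length ss2" using S1 S2 by (auto simp: Sset_def tree_mapping_def)
  have "max i1 i2 < i3" using \<open>0 < length ss1\<close> unfolding i3_def by linarith
  have "length ss1 + length ss2 - 1 \<le> N i3" using le_N[of i3] unfolding i3_def by linarith
  have root: "w1 0 = w2 0" using \<open>w1 0 = x\<close> \<open>w2 0 = x\<close> by simp
  note glued = glued_condition[OF S1 S2 w1 w2 root \<open>max i1 i2 < i3\<close>
      \<open>length ss1 + length ss2 - 1 \<le> N i3\<close>, folded \<sigma>3_def]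
  have "i1 < i3" "i2 < i3" using \<open>max i1 i2 < i3\<close> by simp_all
  have "\<sigma>3 \<in> S" using glued(1) .
  moreover have "x \<in> U \<sigma>3"
  proof -
    have "glue_fun (length ss1) w1 w2 0 = x"
      using \<open>w1 0 = x\<close> \<open>0 < length ss1\<close> by (simp add: glue_fun_def)
    then show ?thesis using glued Uset_iff[of _ i3 _ x] by (auto simp: \<sigma>3_def)
  qed
  moreover have "extends \<sigma>3 \<sigma>1"
    unfolding \<sigma>3_def \<sigma>1 using \<open>i1 < i3\<close> by (rule extends_glued[OF S1 w1 \<open>0 < length ss2\<close>])
  moreover have "U \<sigma>3 \<subseteq> U \<sigma>2"
    using \<open>\<sigma>3 \<in> S\<close> \<open>i2 < i3\<close> unfolding \<sigma>3_def \<sigma>2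
    by (intro Uset_glued_subset[of \<pi>2 i2 ss2 w2 w1, OF S2 w2 root \<open>0 < length ss1\<close>])
  ultimately show ?thesis using Uset_mono assms(1) by blast
qed

lemma openin_Uset: "\<sigma> \<in> S \<Longrightarrow> openin T (U \<sigma>)"
  unfolding tau_def by (rule topology_generated_by_Basis) blast

lemma openin_refine:
  assumes "openin T V" and "\<sigma> \<in> S" and "x \<in> V" and "x \<in> U \<sigma>"
  shows "\<exists>\<sigma>' \<in> S. extends \<sigma>' \<sigma> \<and> x \<in> U \<sigma>' \<and> U \<sigma>' \<subseteq> V"
proof -
  have "generate_topology_on (U ` S) V"
    using assms(1) by (simp add: tau_def openin_topology_generated_by_iff)
  then show ?thesis
    using assms(2-)
  proof (induction arbitrary: \<sigma> rule: generate_topology_on.induct)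
    case Empty
    then show ?case by simp
  next
    case (Int a b)
    obtain \<sigma>1 where "\<sigma>1 \<in> S" "extends \<sigma>1 \<sigma>" "x \<in> U \<sigma>1" "U \<sigma>1 \<subseteq> a"
      using Int.IH(1) Int.prems by blast
    moreover obtain \<sigma>2 where "\<sigma>2 \<in> S" "extends \<sigma>2 \<sigma>1" "x \<in> U \<sigma>2" "U \<sigma>2 \<subseteq> b"
      using Int.IH(2) Int.prems calculation by blast
    ultimately show ?case
      using Uset_mono[of \<sigma>1 \<sigma>2] extends_trans[of \<sigma>2 \<sigma>1 \<sigma>] by blast
  next
    case (UN K)
    then obtain k where "k \<in> K" "x \<in> k" by blast
    then show ?case using UN.IH[of k \<sigma>] UN.prems by blast
  next
    case (Basis s)
    then obtain \<tau> where "\<tau> \<in> S" "s = U \<tau>" by blast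
    then show ?case using Uset_Int_refine[of \<sigma> \<tau> x] Basis.prems by blast
  qed
qed

lemma openin_contains_Uset:
  assumes "openin T V" and "V \<noteq> {}"
  shows "\<exists>\<sigma> \<in> S. U \<sigma> \<subseteq> V"
proof -
  obtain x where "x \<in> V" using assms(2) by blast
  moreover have "topspace T = \<Union> (U ` S)" by (simp add: tau_def)
  ultimately obtain \<tau> where "\<tau> \<in> S" "x \<in> U \<tau>"
    using openin_subset[OF assms(1)] by blast
  then show ?thesis using openin_refine[OF assms(1)] \<open>x \<in> V\<close> by blast
qed

lemma extends_avoiding_nowhere_dense:
  assumes "\<sigma> \<in> S" and "nowhere_dense_in T D"
  shows "\<exists>\<sigma>' \<in> S. extends \<sigma>' \<sigma> \<and> U \<sigma>' \<inter> T closure_of D = {}"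
proof -
  have "\<not> U \<sigma> \<subseteq> T closure_of D"
  proof
    assume "U \<sigma> \<subseteq> T closure_of D"
    then have "U \<sigma> \<subseteq> T interior_of (T closure_of D)"
      using openin_Uset[OF assms(1)] by (rule interior_of_maximal)
    then show False
      using assms(2) Uset_nonempty[OF assms(1)] by (simp add: nowhere_dense_in_def)
  qed
  then obtain x where x: "x \<in> U \<sigma> - T closure_of D" by blast
  have "openin T (U \<sigma> - T closure_of D)"
    using openin_Uset[OF assms(1)] closedin_closure_of by (rule openin_diff)
  from openin_refine[OF this assms(1) x] x obtain \<sigma>' where
    "\<sigma>' \<in> S" "extends \<sigma>' \<sigma>" "U \<sigma>' \<subseteq> U \<sigma> - T closure_of D"
    by blast
  then show ?thesis by blast
qed

lemma Uset_not_meager: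
  assumes "\<sigma> \<in> S" and "U \<sigma> \<subseteq> A"
  shows "\<not> meager_in T A"
proof
  assume "meager_in T A"
  then obtain F where "countable F" and nowhere_dense: "\<forall>B \<in> F. nowhere_dense_in T B"
    and "A = \<Union>F"
    unfolding meager_in_def by blast
  have "F \<noteq> {}" using Uset_nonempty[OF assms(1)] assms(2) \<open>A = \<Union>F\<close> by blast
  define D where "D = from_nat_into F"
  have D: "D m \<in> F" for m using from_nat_into[OF \<open>F \<noteq> {}\<close>] by (simp add: D_def)
  have step: "\<exists>\<sigma>' \<in> S. extends \<sigma>' \<tau> \<and> U \<sigma>' \<inter> T closure_of D m = {}" if "\<tau> \<in> S" for m \<tau>
    using extends_avoiding_nowhere_dense[OF that] nowhere_dense D by blast
  obtain x where "x \<in> U \<sigma>" and avoid: "\<forall>m. \<exists>\<sigma>'. x \<in> U \<sigma>' \<and> U \<sigma>' \<inter> T closure_of D m = {}"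
    using fusion_sequence_point[where R = "\<lambda>m \<sigma>'. U \<sigma>' \<inter> T closure_of D m = {}", OF assms(1) step]
    by blast
  have "x \<in> \<Union> (range D)"
    using \<open>x \<in> U \<sigma>\<close> assms(2) \<open>A = \<Union>F\<close> range_from_nat_into[OF \<open>F \<noteq> {}\<close> \<open>countable F\<close>]
    by (auto simp: D_def)
  then obtain m where "x \<in> D m" by blast
  moreover have "D m \<subseteq> topspace T" using nowhere_dense D by (simp add: nowhere_dense_in_def)
  ultimately have "x \<in> T closure_of D m" using closure_of_subset by blast
  then show False using avoid by blast
qed

end

theorem proposition2p6:
  fixes N :: "nat \<Rightarrow> nat"
    and C :: "nat \<Rightarrow> (nat \<Rightarrow> bool) set"
    and P :: "nat \<Rightarrow> (nat \<Rightarrow> bool) set"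
  assumes N0: "N 0 = 0"
    and Nmono: "strict_mono N"
    and Csub: "\<And>i. C i \<subseteq> seqs {N i..<N (Suc i)}"
    and Cint: "\<And>i s. (\<forall>k \<le> N i. s k \<in> seqs {N i..<N (Suc i)}) \<Longrightarrow>
                 (\<Inter>k \<in> {..N i}. setadd (C i) (s k)) \<noteq> {} \<and>
                 (\<Inter>k \<in> {..N i}. setadd (seqs {N i..<N (Suc i)} - C i) (s k)) \<noteq> {}"
    and Pne: "\<And>m. P m \<noteq> {}"
    and Pperf: "\<And>m. perfect_set (P m)"
  shows "(\<forall>\<rho> \<in> Sset N C P. Uset N C P \<rho> \<noteq> {} \<and> \<not> meager_in (tau N C P) (Uset N C P \<rho>))
         \<and> Baire_space_top (tau N C P)"
proof -
  interpret tree_conditions N C P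
    using Nmono Csub Cint by unfold_locales blast+
  have "Uset N C P \<rho> \<noteq> {} \<and> \<not> meager_in (tau N C P) (Uset N C P \<rho>)" if "\<rho> \<in> Sset N C P" for \<rho>
    using Uset_nonempty[OF that] Uset_not_meager[OF that order.refl] by blast
  moreover have "Baire_space_top (tau N C P)"
    unfolding Baire_space_top_def using openin_contains_Uset Uset_not_meager by blast
  ultimately show ?thesis by blast
qed

end
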